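(* Let $\mathcal X,\mathcal Y$ be finite sets, $f:\mathcal X\times\mathcal Y\to\{0,1\}$, $\mu$ any distribution on $\mathcal X\times\mathcal Y$ and $0<\epsilon<1/2$. Then $\mathrm{IC}^{\mathrm{ext}}_\mu(f,1/2-\epsilon)\le2\epsilon\log(|\mathcal X||\mathcal Y|)$.
   Context: Two-party communication model: Alice gets $x$, Bob gets $y$; protocols may use public and private randomness; the transcript $\Pi$ consists of the public random string and all transmitted bits; the output $\pi(x,y)$ is determined by the transcript. For $(X,Y)\sim\mu$, $\mathrm{IC}^{\mathrm{ext}}_\mu(\pi)=I(\Pi;XY)$ (logs base 2). A protocol performs $[f,\eta]$ if $\Pr[\pi(x,y)\ne f(x,y)]\le\eta$ for every $(x,y)$; $\mathrm{IC}^{\mathrm{ext}}_\mu(f,\eta)=\inf\{\mathrm{IC}^{\mathrm{ext}}_\mu(\pi):\pi\text{ performs }[f,\eta]\}$. *)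

theory Defs
  imports "HOL-Probability.Probability"
begin

text \<open>At an Alice node, Alice sends the bit g x ra, where x is her input and ra her private
  random string; similarly at a Bob node with Bob's input and private random string.
  The node's position in the tree encodes the transcript so far.\<close>

datatype ('x, 'y) ptree =
    Leaf bool
  | ANode "'x \<Rightarrow> nat \<Rightarrow> bool" "('x, 'y) ptree" "('x, 'y) ptree"
  | BNode "'y \<Rightarrow> nat \<Rightarrow> bool" "('x, 'y) ptree" "('x, 'y) ptree"

fun run :: "('x, 'y) ptree \<Rightarrow> 'x \<Rightarrow> 'y \<Rightarrow> nat \<Rightarrow> nat \<Rightarrow> bool list \<times> bool" where
  "run (Leaf b) x y ra rb = ([], b)"
| "run (ANode g t1 t2) x y ra rb =
     (let c = g x ra; (bs, o') = run (if c then t1 else t2) x y ra rb in (c # bs, o'))"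
| "run (BNode g t1 t2) x y ra rb =
     (let c = g y rb; (bs, o') = run (if c then t1 else t2) x y ra rb in (c # bs, o'))"

record ('x, 'y) protocol =
  pub :: "nat pmf"
  privA :: "nat pmf"
  privB :: "nat pmf"
  tree :: "nat \<Rightarrow> ('x, 'y) ptree"

definition transcript :: "('x, 'y) protocol \<Rightarrow> 'x \<Rightarrow> 'y \<Rightarrow> (nat \<times> bool list) pmf" where
  "transcript P x y =
     do { r \<leftarrow> pub P; ra \<leftarrow> privA P; rb \<leftarrow> privB P;
          return_pmf (r, fst (run (tree P r) x y ra rb)) }"

definition prot_output :: "('x, 'y) protocol \<Rightarrow> 'x \<Rightarrow> 'y \<Rightarrow> bool pmf" where
  "prot_output P x y =
     do { r \<leftarrow> pub P; ra \<leftarrow> privA P; rb \<leftarrow> privB P;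
          return_pmf (snd (run (tree P r) x y ra rb)) }"

definition performs :: "('x, 'y) protocol \<Rightarrow> ('x \<Rightarrow> 'y \<Rightarrow> bool) \<Rightarrow> real \<Rightarrow> bool" where
  "performs P f eta \<longleftrightarrow>
     (\<forall>x y. measure_pmf.prob (prot_output P x y) {b. b \<noteq> f x y} \<le> eta)"

definition mutual_info_pmf :: "('a \<times> 'b) pmf \<Rightarrow> real" where
  "mutual_info_pmf J =
     (\<Sum>\<^sub>\<infinity>(a, t)\<in>UNIV.
        (let j = pmf J (a, t) in
         if j = 0 then 0
         else j * log 2 (j / (pmf (map_pmf fst J) a * pmf (map_pmf snd J) t))))"

definition joint :: "('x \<times> 'y) pmf \<Rightarrow> ('x, 'y) protocol \<Rightarrow> (('x \<times> 'y) \<times> (nat \<times> bool list)) pmf" where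
  "joint mu P = do { (x, y) \<leftarrow> mu; t \<leftarrow> transcript P x y; return_pmf ((x, y), t) }"

definition IC_ext :: "('x \<times> 'y) pmf \<Rightarrow> ('x, 'y) protocol \<Rightarrow> real" where
  "IC_ext mu P = mutual_info_pmf (joint mu P)"

definition IC_ext_f :: "('x \<times> 'y) pmf \<Rightarrow> ('x \<Rightarrow> 'y \<Rightarrow> bool) \<Rightarrow> real \<Rightarrow> ereal" where
  "IC_ext_f mu f eta = (INF P \<in> {P. performs P f eta}. ereal (IC_ext mu P))"

end

theory Submission imports Defs begin

text \<open>With probability \<open>2\<epsilon>\<close> (public coin) both players announce their inputs and output
  \<open>f x y\<close>; otherwise they output a fair public coin and transmit nothing. The error is
  \<open>(1 - 2\<epsilon>)/2\<close> on every input, and the transcript reveals \<open>(X,Y)\<close> with probability \<open>2\<epsilon>\<close> and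
  nothing otherwise, so the information cost is \<open>2\<epsilon> H(X,Y) \<le> 2\<epsilon> log (|X||Y|)\<close>.\<close>

definition entropy_pmf :: "'a pmf \<Rightarrow> real" where
  "entropy_pmf mu = (\<Sum>a\<in>set_pmf mu. pmf mu a * log 2 (1 / pmf mu a))"

lemma entropy_pmf_le_log_card:
  fixes mu :: "'a pmf"
  assumes fin: "finite (set_pmf mu)" and card_le: "real (card (set_pmf mu)) \<le> N"
  shows "entropy_pmf mu \<le> log 2 N"
proof -
  let ?S = "set_pmf mu"
  have "card ?S > 0" using fin set_pmf_not_empty by (simp add: card_gt_0_iff)
  hence N_pos: "N > 0" using card_le by linarith
  have sum_one: "(\<Sum>a\<in>?S. pmf mu a) = 1" using fin by (rule sum_pmf_eq_1) simp
  have pointwise: "pmf mu a * log 2 (1 / pmf mu a) \<le> pmf mu a * log 2 N + (1/N - pmf mu a) / ln 2"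
    if "a \<in> ?S" for a
  proof -
    have p: "pmf mu a > 0" using that by (simp add: pmf_positive)
    have "log 2 (1 / pmf mu a) - log 2 N = ln (1 / (pmf mu a * N)) / ln 2"
      using p N_pos by (simp add: log_def ln_div ln_mult diff_divide_distrib)
    also have "\<dots> \<le> (1 / (pmf mu a * N) - 1) / ln 2"
      by (rule divide_right_mono) (use p N_pos in \<open>auto intro!: ln_le_minus_one\<close>)
    finally have "pmf mu a * (log 2 (1 / pmf mu a) - log 2 N)
        \<le> pmf mu a * ((1 / (pmf mu a * N) - 1) / ln 2)"
      using p by (intro mult_left_mono) auto
    also have "\<dots> = (1/N - pmf mu a) / ln 2" using p by (simp add: field_simps)
    finally show ?thesis by (simp add: algebra_simps)
  qed
  have "entropy_pmf mu \<le> (\<Sum>a\<in>?S. pmf mu a * log 2 N + (1/N - pmf mu a) / ln 2)"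
    unfolding entropy_pmf_def by (rule sum_mono) (rule pointwise)
  also have "\<dots> = log 2 N * (\<Sum>a\<in>?S. pmf mu a) + (real (card ?S) / N - (\<Sum>a\<in>?S. pmf mu a)) / ln 2"
    by (simp add: sum.distrib sum_distrib_right sum_divide_distrib[symmetric] sum_subtractf
        algebra_simps)
  also have "\<dots> = log 2 N + (real (card ?S) / N - 1) / ln 2"
    using sum_one by simp
  also have "\<dots> \<le> log 2 N"
    using card_le N_pos by (simp add: divide_nonpos_pos)
  finally show ?thesis .
qed

lemma mutual_info_pmf_public_coin:
  fixes mu :: "'a::countable pmf" and R :: "'r pmf" and T :: "'r \<Rightarrow> 'a \<Rightarrow> 'c"
  assumes fin_mu: "finite (set_pmf mu)" and fin_R: "finite (set_pmf R)"
  shows "mutual_info_pmf (map_pmf (\<lambda>(a, r). (a, (r, T r a))) (pair_pmf mu R)) =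
    (\<Sum>a\<in>set_pmf mu. \<Sum>r\<in>set_pmf R. pmf mu a * pmf R r *
        log 2 (1 / measure_pmf.prob mu {a'. T r a' = T r a}))"
proof -
  define h where "h = (\<lambda>(a, r). (a, (r, T r a)))"
  let ?J = "map_pmf h (pair_pmf mu R)"
  have inj: "inj h" by (auto simp: h_def inj_def)
  have pmf_J: "pmf ?J (h (a, r)) = pmf mu a * pmf R r" for a r
    using pmf_map_inj'[OF inj] by (simp add: pmf_pair)
  have "map_pmf fst ?J = map_pmf fst (pair_pmf mu R)"
    by (simp add: pmf.map_comp o_def h_def case_prod_beta)
  hence fst_J: "map_pmf fst ?J = mu" by (simp add: map_fst_pair_pmf)
  have snd_J: "pmf (map_pmf snd ?J) (r, T r a) =
      measure_pmf.prob mu {a'. T r a' = T r a} * pmf R r" for r a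
  proof -
    have "(snd \<circ> h) -` {(r, T r a)} = {a'. T r a' = T r a} \<times> {r}"
      by (auto simp: h_def)
    hence "pmf (map_pmf snd ?J) (r, T r a) =
        measure_pmf.prob (pair_pmf mu R) ({a'. T r a' = T r a} \<times> {r})"
      by (simp add: pmf.map_comp pmf_map)
    also have "\<dots> = measure_pmf.prob mu {a'. T r a' = T r a} * pmf R r"
      by (simp add: measure_pmf_prob_product measure_pmf_single)
    finally show ?thesis .
  qed
  define F where "F = (\<lambda>(a, t). let j = pmf ?J (a, t) in if j = 0 then 0
      else j * log 2 (j / (pmf (map_pmf fst ?J) a * pmf (map_pmf snd ?J) t)))"
  have "mutual_info_pmf ?J = infsum F UNIV" by (simp only: mutual_info_pmf_def F_def)
  also have "\<dots> = infsum F (set_pmf ?J)"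
  proof (rule infsum_cong_neutral)
    fix x assume "x \<in> UNIV - set_pmf ?J"
    hence "pmf ?J x = 0" by (meson DiffD2 set_pmf_iff)
    thus "F x = 0" by (simp add: F_def case_prod_beta Let_def)
  qed auto
  also have "\<dots> = sum (F \<circ> h) (set_pmf mu \<times> set_pmf R)"
    using fin_mu fin_R inj by (simp add: sum.reindex inj_on_def inj_def)
  also have "\<dots> = (\<Sum>a\<in>set_pmf mu. \<Sum>r\<in>set_pmf R. F (h (a, r)))"
    by (simp add: sum.cartesian_product)
  also have "\<dots> = (\<Sum>a\<in>set_pmf mu. \<Sum>r\<in>set_pmf R. pmf mu a * pmf R r *
        log 2 (1 / measure_pmf.prob mu {a'. T r a' = T r a}))"
  proof (intro sum.cong refl)
    fix a r assume "a \<in> set_pmf mu" and "r \<in> set_pmf R"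
    hence "pmf mu a > 0" "pmf R r > 0" by (auto simp: pmf_positive)
    moreover have "h (a, r) = (a, (r, T r a))" by (simp add: h_def)
    ultimately show "F (h (a, r)) = pmf mu a * pmf R r *
        log 2 (1 / measure_pmf.prob mu {a'. T r a' = T r a})"
      using pmf_J[of a r] snd_J[of r a] fst_J by (simp add: F_def Let_def)
  qed
  finally show ?thesis by (simp add: h_def)
qed

lemma joint_deterministic_private:
  assumes "privA P = return_pmf ra" and "privB P = return_pmf rb"
  shows "joint mu P = map_pmf (\<lambda>(a, r). (a, (r, fst (run (tree P r) (fst a) (snd a) ra rb))))
      (pair_pmf mu (pub P))"
  unfolding joint_def transcript_def pair_pmf_def map_pmf_def assms
  by (simp add: bind_return_pmf bind_assoc_pmf case_prod_unfold)

lemma prot_output_deterministic_private: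
  assumes "privA P = return_pmf ra" and "privB P = return_pmf rb"
  shows "prot_output P x y = map_pmf (\<lambda>r. snd (run (tree P r) x y ra rb)) (pub P)"
  unfolding prot_output_def map_pmf_def assms by (simp add: bind_return_pmf)

text \<open>The position of the input in the list is announced in unary, which makes the
  transcript prefix-free and hence injective in the input.\<close>

fun announce_alice :: "'x list \<Rightarrow> ('x \<Rightarrow> ('x, 'y) ptree) \<Rightarrow> ('x, 'y) ptree" where
  "announce_alice [] k = Leaf False"
| "announce_alice (a # as) k = ANode (\<lambda>x _. x = a) (k a) (announce_alice as k)"

fun announce_bob :: "'y list \<Rightarrow> ('y \<Rightarrow> ('x, 'y) ptree) \<Rightarrow> ('x, 'y) ptree" where
  "announce_bob [] k = Leaf False"
| "announce_bob (b # bs) k = BNode (\<lambda>y _. y = b) (k b) (announce_bob bs k)"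

definition unary_index :: "'a list \<Rightarrow> 'a \<Rightarrow> nat" where
  "unary_index as x = length (takeWhile (\<lambda>a. a \<noteq> x) as)"

lemma nth_unary_index: "x \<in> set as \<Longrightarrow> as ! unary_index as x = x"
  unfolding unary_index_def by (induction as) auto

lemma unary_prefix_inj:
  "replicate n False @ True # L = replicate m False @ True # L' \<Longrightarrow> n = m \<and> L = L'"
proof (induction n arbitrary: m)
  case 0 thus ?case by (cases m) auto
next
  case (Suc n) thus ?case by (cases m) auto
qed

lemma run_announce_alice:
  "x \<in> set as \<Longrightarrow> run (announce_alice as k) x y ra rb =
     (replicate (unary_index as x) False @ True # fst (run (k x) x y ra rb),
      snd (run (k x) x y ra rb))"
  unfolding unary_index_def by (induction as) (auto simp: Let_def split: prod.split)

lemma run_announce_bob: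
  "y \<in> set bs \<Longrightarrow> run (announce_bob bs k) x y ra rb =
     (replicate (unary_index bs y) False @ True # fst (run (k y) x y ra rb),
      snd (run (k y) x y ra rb))"
  unfolding unary_index_def by (induction bs) (auto simp: Let_def split: prod.split)

definition reveal_tree :: "'x list \<Rightarrow> 'y list \<Rightarrow> ('x \<Rightarrow> 'y \<Rightarrow> bool) \<Rightarrow> ('x, 'y) ptree" where
  "reveal_tree xs ys f = announce_alice xs (\<lambda>a. announce_bob ys (\<lambda>b. Leaf (f a b)))"

lemma run_reveal_tree:
  assumes "x \<in> set xs" and "y \<in> set ys"
  shows "run (reveal_tree xs ys f) x y ra rb =
    (replicate (unary_index xs x) False @ True # replicate (unary_index ys y) False @ [True], f x y)"
  using assms by (simp add: reveal_tree_def run_announce_alice run_announce_bob)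

lemma reveal_tree_transcript_inj:
  assumes "x \<in> set xs" "y \<in> set ys" "x' \<in> set xs" "y' \<in> set ys"
    and "fst (run (reveal_tree xs ys f) x y ra rb) = fst (run (reveal_tree xs ys f) x' y' ra rb)"
  shows "x = x' \<and> y = y'"
proof -
  have "unary_index xs x = unary_index xs x' \<and> unary_index ys y = unary_index ys y'"
    using assms by (simp add: run_reveal_tree) (metis unary_prefix_inj)
  thus ?thesis using assms(1-4) by (metis nth_unary_index)
qed

text \<open>Public coin: \<open>0\<close> (reveal) with probability \<open>d\<close>, otherwise \<open>1\<close> or \<open>2\<close>
  (output \<open>True\<close> resp. \<open>False\<close>) with probability \<open>(1 - d)/2\<close> each.\<close>

definition reveal_coin :: "real \<Rightarrow> nat pmf" where
  "reveal_coin d = map_pmf (\<lambda>(b, c). if b then 0 else if c then 1 else 2)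
     (pair_pmf (bernoulli_pmf d) (bernoulli_pmf (1/2)))"

lemma finite_set_reveal_coin: "finite (set_pmf (reveal_coin d))"
  by (rule finite_subset[of _ "{0, 1, 2}"]) (auto simp: reveal_coin_def split: if_splits)

lemma pmf_reveal_coin_0:
  assumes "0 \<le> d" "d \<le> 1"
  shows "pmf (reveal_coin d) 0 = d"
proof -
  have "pmf (reveal_coin d) 0 =
      measure_pmf.prob (pair_pmf (bernoulli_pmf d) (bernoulli_pmf (1/2))) ({True} \<times> UNIV)"
    unfolding reveal_coin_def pmf_map
    by (rule arg_cong[where f="measure_pmf.prob _"]) (auto split: if_splits)
  thus ?thesis using assms by (simp add: measure_pmf_prob_product measure_pmf_single)
qed

lemma prob_reveal_coin_guess_wrong:
  assumes "0 \<le> d" "d \<le> 1"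
  shows "measure_pmf.prob (reveal_coin d) {r. r \<noteq> 0 \<and> (r = 1) \<noteq> v} = (1 - d) / 2"
proof -
  have "measure_pmf.prob (reveal_coin d) {r. r \<noteq> 0 \<and> (r = 1) \<noteq> v} =
      measure_pmf.prob (pair_pmf (bernoulli_pmf d) (bernoulli_pmf (1/2))) ({False} \<times> {\<not> v})"
    unfolding reveal_coin_def measure_map_pmf
    by (rule arg_cong[where f="measure_pmf.prob _"]) (auto split: if_splits)
  thus ?thesis
    using assms by (simp add: measure_pmf_prob_product measure_pmf_single del: insert_Times_insert)
qed

definition reveal_protocol ::
    "'x list \<Rightarrow> 'y list \<Rightarrow> ('x \<Rightarrow> 'y \<Rightarrow> bool) \<Rightarrow> real \<Rightarrow> ('x, 'y) protocol" where
  "reveal_protocol xs ys f d =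
     \<lparr>pub = reveal_coin d, privA = return_pmf 0, privB = return_pmf 0,
      tree = (\<lambda>r. if r = 0 then reveal_tree xs ys f else Leaf (r = 1))\<rparr>"

lemma performs_reveal_protocol:
  assumes "set xs = UNIV" "set ys = UNIV" and "0 \<le> d" "d \<le> 1"
  shows "performs (reveal_protocol xs ys f d) f ((1 - d) / 2)"
  unfolding performs_def
proof (intro allI)
  fix x y
  have "snd (run (tree (reveal_protocol xs ys f d) r) x y 0 0) = (if r = 0 then f x y else r = 1)"
    for r using assms(1,2) by (simp add: reveal_protocol_def run_reveal_tree)
  hence "prot_output (reveal_protocol xs ys f d) x y =
      map_pmf (\<lambda>r. if r = 0 then f x y else r = 1) (reveal_coin d)"
    by (simp add: prot_output_deterministic_private reveal_protocol_def)
  hence "measure_pmf.prob (prot_output (reveal_protocol xs ys f d) x y) {b. b \<noteq> f x y} =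
      measure_pmf.prob (reveal_coin d) {r. (if r = 0 then f x y else r = 1) \<noteq> f x y}"
    by (simp only: measure_map_pmf vimage_Collect_eq)
  also have "{r. (if r = 0 then f x y else r = 1) \<noteq> f x y} = {r. r \<noteq> 0 \<and> (r = 1) \<noteq> f x y}"
    by auto
  finally show "measure_pmf.prob (prot_output (reveal_protocol xs ys f d) x y)
      {b. b \<noteq> f x y} \<le> (1 - d) / 2"
    using prob_reveal_coin_guess_wrong[OF assms(3,4)] by simp
qed

lemma IC_ext_reveal_protocol:
  fixes mu :: "('x::countable \<times> 'y::countable) pmf"
  assumes xs: "set xs = UNIV" and ys: "set ys = UNIV" and "0 \<le> d" "d \<le> 1"
  shows "IC_ext mu (reveal_protocol xs ys f d) = d * entropy_pmf mu"
proof -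
  let ?P = "reveal_protocol xs ys f d" and ?R = "reveal_coin d"
  define T where "T r a = fst (run (tree ?P r) (fst a) (snd a) 0 0)" for r and a :: "'x \<times> 'y"
  have T_0_inj: "T 0 a' = T 0 a \<longleftrightarrow> a' = a" for a a'
    using reveal_tree_transcript_inj[of "fst a'" xs "snd a'" ys "fst a" "snd a" f 0 0] xs ys
    by (auto simp: T_def reveal_protocol_def prod_eq_iff)
  have T_silent: "r \<noteq> 0 \<Longrightarrow> T r a = []" for r a
    by (simp add: T_def reveal_protocol_def)
  have fin_mu: "finite (set_pmf mu)"
  proof (rule finite_subset)
    show "finite (set xs \<times> set ys)" by simp
  qed (simp add: xs ys)
  have "joint mu ?P = map_pmf (\<lambda>(a, r). (a, (r, T r a))) (pair_pmf mu ?R)"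
    by (simp add: joint_deterministic_private reveal_protocol_def T_def case_prod_beta)
  hence "IC_ext mu ?P = (\<Sum>a\<in>set_pmf mu. \<Sum>r\<in>set_pmf ?R.
      pmf mu a * pmf ?R r * log 2 (1 / measure_pmf.prob mu {a'. T r a' = T r a}))"
    by (simp add: IC_ext_def mutual_info_pmf_public_coin[OF fin_mu finite_set_reveal_coin])
  also have "\<dots> = (\<Sum>a\<in>set_pmf mu. \<Sum>r\<in>set_pmf ?R.
      if r = 0 then pmf ?R 0 * (pmf mu a * log 2 (1 / pmf mu a)) else 0)"
    by (intro sum.cong refl) (auto simp: T_0_inj T_silent measure_pmf_single)
  also have "\<dots> = (\<Sum>a\<in>set_pmf mu. pmf ?R 0 * (pmf mu a * log 2 (1 / pmf mu a)))"
    using finite_set_reveal_coin by (intro sum.cong refl) (simp add: set_pmf_iff)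
  also have "\<dots> = d * entropy_pmf mu"
    by (simp add: pmf_reveal_coin_0[OF assms(3,4)] entropy_pmf_def sum_distrib_left)
  finally show ?thesis .
qed

theorem theorem9:
  fixes f :: "'x::finite \<Rightarrow> 'y::finite \<Rightarrow> bool"
    and mu :: "('x \<times> 'y) pmf"
    and \<epsilon> :: real
  assumes "0 < \<epsilon>" and "\<epsilon> < 1/2"
  shows "IC_ext_f mu f (1/2 - \<epsilon>) \<le> ereal (2 * \<epsilon> * log 2 (real (CARD('x) * CARD('y))))"
proof -
  obtain xs :: "'x list" where xs: "set xs = UNIV" using finite_list[of "UNIV :: 'x set"] by auto
  obtain ys :: "'y list" where ys: "set ys = UNIV" using finite_list[of "UNIV :: 'y set"] by auto
  let ?P = "reveal_protocol xs ys f (2 * \<epsilon>)"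
  have d: "0 \<le> 2 * \<epsilon>" "2 * \<epsilon> \<le> 1" using assms by auto
  have "performs ?P f (1/2 - \<epsilon>)"
    using performs_reveal_protocol[OF xs ys d] by (simp add: diff_divide_distrib)
  hence "IC_ext_f mu f (1/2 - \<epsilon>) \<le> ereal (IC_ext mu ?P)"
    unfolding IC_ext_f_def by (rule INF_lower[OF CollectI])
  also have "IC_ext mu ?P = 2 * \<epsilon> * entropy_pmf mu"
    by (rule IC_ext_reveal_protocol[OF xs ys d])
  also have "\<dots> \<le> 2 * \<epsilon> * log 2 (real (CARD('x) * CARD('y)))"
  proof (intro mult_left_mono entropy_pmf_le_log_card)
    have "card (set_pmf mu) \<le> CARD('x \<times> 'y)" by (rule card_mono) auto
    thus "real (card (set_pmf mu)) \<le> real (CARD('x) * CARD('y))"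
      by (simp only: card_prod of_nat_le_iff)
  qed (use d in auto)
  finally show ?thesis by simp
qed

end
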